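(* Let $m \ge 2$ and $n \ge 2m-2$ be integers. Then for every real $r$ with $|r|<1$, $$\int_{-1}^1 \frac{U_n(s)(1-s^2)^{m-\frac{1}{2}}}{s-r}\,ds = \pi(-1)^{m}\left(\frac{1}{2}\right)^{2m-2}\sum_{j=0}^{2m-2}(-1)^j\binom{2m-2}{j}T_{n+3-2m+2j}(r),$$ where the integral is a Cauchy principal-value integral.
   Context: $T_k(s)=\cos(k\cos^{-1}s)$ is the Tchebyshev polynomial of the first kind and $U_k(s)=\frac{\sin((k+1)\cos^{-1}s)}{\sin(\cos^{-1}s)}$ is the Tchebyshev polynomial of the second kind, $k=0,1,2,\dots$. The integral with singular point $s=r\in(-1,1)$ is understood in the Cauchy principal-value sense. $\binom{a}{j}=\frac{a!}{j!(a-j)!}$. *)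

theory Defs
  imports "HOL-Analysis.Analysis"
begin

definition cheb_T :: "nat \<Rightarrow> real \<Rightarrow> real" where
  "cheb_T k s = cos (real k * arccos s)"

definition cheb_U :: "nat \<Rightarrow> real \<Rightarrow> real" where
  "cheb_U k s = sin ((real k + 1) * arccos s) / sin (arccos s)"

definition pv_has_integral ::
  "(real \<Rightarrow> real) \<Rightarrow> real \<Rightarrow> real \<Rightarrow> real \<Rightarrow> real \<Rightarrow> bool" where
  "pv_has_integral f a b r I \<longleftrightarrow>
     (\<forall>\<^sub>F e in at_right 0. f integrable_on {a..r-e} \<and> f integrable_on {r+e..b}) \<and>
     ((\<lambda>e. integral {a..r-e} f + integral {r+e..b} f) \<longlongrightarrow> I) (at_right 0)"

end

(*
  Substitute s = cos theta. Then sqrt (1 - s^2) = sin theta and U_n(s) sin theta = sin ((n+1) theta),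
  so the integrand is sin ((n+1) theta) sin^(2m-2) theta / (s - r). Expanding
  sin^(2m-2) theta = ((e^(i theta) - e^(-i theta)) / 2i)^(2m-2) binomially writes the numerator as
  (-1/4)^(m-1) sum_j (-1)^j C(2m-2, j) sin ((n+3-2m+2j) theta), so everything reduces to
  PV int sin (k theta) / (s - r) ds = -pi T_k(r) for k >= 1.
  For k = 1 an explicit logarithmic antiderivative of sqrt (1 - s^2) / (s - r) is available.
  The recurrence sin ((k+2) theta) = 2 s sin ((k+1) theta) - sin (k theta), together with
  2 s / (s - r) = 2 + 2 r / (s - r), then reproduces T_{k+2}(r) = 2 r T_{k+1}(r) - T_k(r), up to the
  regular integral int sin ((k+1) theta) ds, which vanishes unless k = 0.
*)

theory Submission
  imports Defs
begin

lemma pv_has_integral_cong: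
  assumes "pv_has_integral f a b r I" "a \<le> r" "r \<le> b"
    and "\<And>s. s \<in> {a..b} \<Longrightarrow> s \<noteq> r \<Longrightarrow> f s = g s"
  shows "pv_has_integral g a b r I"
proof -
  have "f integrable_on {a..r-e} \<longleftrightarrow> g integrable_on {a..r-e}"
       "f integrable_on {r+e..b} \<longleftrightarrow> g integrable_on {r+e..b}"
       "integral {a..r-e} f = integral {a..r-e} g"
       "integral {r+e..b} f = integral {r+e..b} g" if "e > 0" for e
    using that assms(2-) by (auto intro!: integrable_cong integral_cong)
  moreover have "\<forall>\<^sub>F e in at_right 0. (e::real) > 0"
    by (simp add: eventually_at_right_less)
  ultimately have ev: "\<forall>\<^sub>F e in at_right 0.
      (f integrable_on {a..r-e} \<longleftrightarrow> g integrable_on {a..r-e}) \<and>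
      (f integrable_on {r+e..b} \<longleftrightarrow> g integrable_on {r+e..b}) \<and>
      integral {a..r-e} f + integral {r+e..b} f = integral {a..r-e} g + integral {r+e..b} g"
    by (auto elim: eventually_mono)
  from assms(1) have integrable: "\<forall>\<^sub>F e in at_right 0. f integrable_on {a..r-e} \<and> f integrable_on {r+e..b}"
    and lim: "((\<lambda>e. integral {a..r-e} f + integral {r+e..b} f) \<longlongrightarrow> I) (at_right 0)"
    unfolding pv_has_integral_def by auto
  from ev integrable have "\<forall>\<^sub>F e in at_right 0. g integrable_on {a..r-e} \<and> g integrable_on {r+e..b}"
    by eventually_elim simp
  moreover from lim have "((\<lambda>e. integral {a..r-e} g + integral {r+e..b} g) \<longlongrightarrow> I) (at_right 0)"
    by (rule Lim_transform_eventually) (use ev in \<open>auto elim: eventually_mono\<close>)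
  ultimately show ?thesis
    unfolding pv_has_integral_def by blast
qed

lemma pv_has_integral_add:
  assumes "pv_has_integral f a b r I" "pv_has_integral g a b r J"
  shows "pv_has_integral (\<lambda>s. f s + g s) a b r (I + J)"
proof -
  have "\<forall>\<^sub>F e in at_right 0. f integrable_on {a..r-e} \<and> f integrable_on {r+e..b}"
    and "\<forall>\<^sub>F e in at_right 0. g integrable_on {a..r-e} \<and> g integrable_on {r+e..b}"
    using assms unfolding pv_has_integral_def by auto
  then have "\<forall>\<^sub>F e in at_right 0.
      (\<lambda>s. f s + g s) integrable_on {a..r-e} \<and> (\<lambda>s. f s + g s) integrable_on {r+e..b} \<and>
      integral {a..r-e} f + integral {r+e..b} f + (integral {a..r-e} g + integral {r+e..b} g)
      = integral {a..r-e} (\<lambda>s. f s + g s) + integral {r+e..b} (\<lambda>s. f s + g s)"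
    by eventually_elim (auto simp: integral_add intro: integrable_add)
  moreover have "((\<lambda>e. integral {a..r-e} f + integral {r+e..b} f
      + (integral {a..r-e} g + integral {r+e..b} g)) \<longlongrightarrow> I + J) (at_right 0)"
    using assms unfolding pv_has_integral_def by (intro tendsto_add) auto
  ultimately show ?thesis
    unfolding pv_has_integral_def by (auto elim: eventually_mono Lim_transform_eventually)
qed

lemma pv_has_integral_cmult:
  assumes "pv_has_integral f a b r I"
  shows "pv_has_integral (\<lambda>s. c * f s) a b r (c * I)"
proof -
  have "\<forall>\<^sub>F e in at_right 0.
      (\<lambda>s. c * f s) integrable_on {a..r-e} \<and> (\<lambda>s. c * f s) integrable_on {r+e..b} \<and>
      c * (integral {a..r-e} f + integral {r+e..b} f)
      = integral {a..r-e} (\<lambda>s. c * f s) + integral {r+e..b} (\<lambda>s. c * f s)"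
    using assms unfolding pv_has_integral_def
    by (auto elim!: eventually_mono simp: distrib_left intro: integrable_on_mult_right)
  moreover have "((\<lambda>e. c * (integral {a..r-e} f + integral {r+e..b} f)) \<longlongrightarrow> c * I) (at_right 0)"
    using assms unfolding pv_has_integral_def by (intro tendsto_mult) auto
  ultimately show ?thesis
    unfolding pv_has_integral_def by (auto elim: eventually_mono Lim_transform_eventually)
qed

lemma pv_has_integral_0: "pv_has_integral (\<lambda>s. 0) a b r 0"
  unfolding pv_has_integral_def by (simp add: integrable_0)

lemma pv_has_integral_sum:
  assumes "finite A" "\<And>j. j \<in> A \<Longrightarrow> pv_has_integral (f j) a b r (I j)"
  shows "pv_has_integral (\<lambda>s. \<Sum>j\<in>A. f j s) a b r (\<Sum>j\<in>A. I j)"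
  using assms by (induction A rule: finite_induct) (simp_all add: pv_has_integral_0 pv_has_integral_add)

lemma pv_has_integral_antiderivative:
  fixes G f :: "real \<Rightarrow> real"
  assumes "a < r" "r < b" "continuous_on ({a..b} - {r}) G"
    and "\<And>x. x \<in> {a<..<b} \<Longrightarrow> x \<noteq> r \<Longrightarrow> (G has_real_derivative f x) (at x)"
    and "((\<lambda>e. G (r - e) - G (r + e)) \<longlongrightarrow> D) (at_right 0)"
  shows "pv_has_integral f a b r (G b - G a + D)"
proof -
  have ftc: "(f has_integral G d - G c) {c..d}" if "a \<le> c" "c \<le> d" "d \<le> b" "r \<notin> {c..d}" for c d
  proof (rule fundamental_theorem_of_calculus_interior)
    show "continuous_on {c..d} G"
      using that by (intro continuous_on_subset[OF assms(3)]) auto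
    show "(G has_vector_derivative f x) (at x)" if "x \<in> {c<..<d}" for x
      using that \<open>a \<le> c\<close> \<open>d \<le> b\<close> \<open>r \<notin> {c..d}\<close> assms(4)[of x]
      by (auto simp: has_real_derivative_iff_has_vector_derivative)
  qed fact
  have "\<forall>\<^sub>F e in at_right 0. 0 < e \<and> e < min (r - a) (b - r)"
    using assms(1,2) by (intro eventually_conj eventually_at_right_less order_tendstoD(2)[OF tendsto_ident_at]) auto
  then have "\<forall>\<^sub>F e in at_right 0.
      (f has_integral G (r-e) - G a) {a..r-e} \<and> (f has_integral G b - G (r+e)) {r+e..b}"
    by eventually_elim (auto intro!: ftc)
  then have "\<forall>\<^sub>F e in at_right 0. f integrable_on {a..r-e} \<and> f integrable_on {r+e..b} \<and>
      G b - G a + (G (r - e) - G (r + e)) = integral {a..r-e} f + integral {r+e..b} f"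
    by eventually_elim (auto simp: has_integral_integrable_integral)
  moreover have "((\<lambda>e. G b - G a + (G (r - e) - G (r + e))) \<longlongrightarrow> G b - G a + D) (at_right 0)"
    by (intro tendsto_add tendsto_const assms(5))
  ultimately show ?thesis
    unfolding pv_has_integral_def by (auto elim: eventually_mono Lim_transform_eventually)
qed

lemma symmetric_difference_tendsto_0:
  fixes G :: "real \<Rightarrow> real"
  assumes "isCont G r"
  shows "((\<lambda>e. G (r - e) - G (r + e)) \<longlongrightarrow> 0) (at_right 0)"
proof -
  have "((\<lambda>e. r - e) \<longlongrightarrow> r) (at_right 0)" "((\<lambda>e. r + e) \<longlongrightarrow> r) (at_right 0)"
    by (auto intro!: tendsto_eq_intros)
  then have "((\<lambda>e. G (r - e) - G (r + e)) \<longlongrightarrow> G r - G r) (at_right 0)"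
    by (intro tendsto_diff isCont_tendsto_compose[OF assms])
  then show ?thesis by simp
qed

lemma pv_has_integral_continuous_antiderivative:
  fixes G f :: "real \<Rightarrow> real"
  assumes "a < r" "r < b" "continuous_on {a..b} G"
    and "\<And>x. x \<in> {a<..<b} \<Longrightarrow> x \<noteq> r \<Longrightarrow> (G has_real_derivative f x) (at x)"
  shows "pv_has_integral f a b r (G b - G a)"
proof -
  have "isCont G r"
    using assms(1-3) continuous_on_interior[of "{a..b}" G r] by auto
  then show ?thesis
    using pv_has_integral_antiderivative[OF assms(1,2) _ assms(4) symmetric_difference_tendsto_0]
      continuous_on_subset[OF assms(3)] by auto
qed

definition cos_primitive :: "real \<Rightarrow> real \<Rightarrow> real" where
  "cos_primitive a t = (if a = 0 then t else sin (a * t) / a)"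

lemma has_real_derivative_cos_primitive:
  "(cos_primitive a has_real_derivative cos (a * t)) (at t)"
  unfolding cos_primitive_def[abs_def]
  by (cases "a = 0") (auto intro!: derivative_eq_intros)

lemma continuous_on_cos_primitive [continuous_intros]:
  fixes f :: "real \<Rightarrow> real"
  shows "continuous_on S f \<Longrightarrow> continuous_on S (\<lambda>x. cos_primitive a (f x))"
  unfolding cos_primitive_def by (cases "a = 0") (auto intro!: continuous_intros)

lemma cos_primitive_0 [simp]: "cos_primitive a 0 = 0"
  by (simp add: cos_primitive_def)

lemma cos_primitive_of_nat_pi: "cos_primitive (real k) pi = (if k = 0 then pi else 0)"
  by (simp add: cos_primitive_def sin_npi)

lemma has_real_derivative_cos_primitive_arccos:
  assumes "-1 < x" "x < 1"
  shows "((\<lambda>s. cos_primitive a (arccos s)) has_real_derivative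
           - cos (a * arccos x) / sin (arccos x)) (at x)"
proof -
  have "((\<lambda>s. cos_primitive a (arccos s)) has_real_derivative
           cos (a * arccos x) * inverse (- sqrt (1 - x\<^sup>2))) (at x)"
    by (rule DERIV_chain2[OF has_real_derivative_cos_primitive DERIV_arccos[OF assms]])
  then show ?thesis
    using assms by (simp add: sin_arccos divide_inverse)
qed

lemma pv_has_integral_sin_arccos:
  assumes "\<bar>r\<bar> < 1"
  shows "pv_has_integral (\<lambda>s. sin (real (Suc k) * arccos s)) (-1) 1 r (if k = 0 then pi/2 else 0)"
proof -
  define G where
    "G s = (cos_primitive (real (k + 2)) (arccos s) - cos_primitive (real k) (arccos s)) / 2" for s
  have "continuous_on {-1..1} G"
    unfolding G_def by (intro continuous_intros) auto
  moreover have "(G has_real_derivative sin (real (Suc k) * arccos x)) (at x)" if "-1 < x" "x < 1" for x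
  proof -
    have "(G has_real_derivative (- cos (real (k + 2) * arccos x) / sin (arccos x)
        - (- cos (real k * arccos x) / sin (arccos x))) / 2) (at x)"
      unfolding G_def[abs_def]
      by (intro DERIV_cdivide DERIV_diff has_real_derivative_cos_primitive_arccos that)
    moreover have "cos (real k * arccos x) - cos (real (k + 2) * arccos x)
        = 2 * sin (real (Suc k) * arccos x) * sin (arccos x)"
    proof -
      have "real (Suc k) * arccos x - arccos x = real k * arccos x"
        "real (Suc k) * arccos x + arccos x = real (k + 2) * arccos x"
        by (simp_all add: algebra_simps)
      then show ?thesis
        using sin_times_sin[of "real (Suc k) * arccos x" "arccos x"] by simp
    qed
    ultimately show ?thesis
      using sin_arccos_nonzero[OF that] by (simp add: diff_divide_distrib[symmetric])
  qed
  ultimately have "pv_has_integral (\<lambda>s. sin (real (Suc k) * arccos s)) (-1) 1 r (G 1 - G (-1))"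
    using assms by (intro pv_has_integral_continuous_antiderivative) auto
  moreover have "G 1 - G (-1) = (if k = 0 then pi/2 else 0)"
    using cos_primitive_of_nat_pi[of "k + 2"] cos_primitive_of_nat_pi[of k] by (simp add: G_def)
  ultimately show ?thesis by simp
qed

lemma pv_has_integral_sqrt_div:
  assumes "\<bar>r\<bar> < 1"
  shows "pv_has_integral (\<lambda>s. sqrt (1 - s\<^sup>2) / (s - r)) (-1) 1 r (- pi * r)"
proof -
  define q where "q = sqrt (1 - r\<^sup>2)"
  \<comment> \<open>\<open>sqrt (1 - s\<^sup>2) / (s - r) = - (s + r) / sqrt (1 - s\<^sup>2) + q\<^sup>2 / ((s - r) * sqrt (1 - s\<^sup>2))\<close>;
      the second summand has the antiderivative \<open>- q * (ln (N s) - ln \<bar>s - r\<bar>)\<close>.\<close>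
  define N where "N s = 1 - r * s + q * sqrt (1 - s\<^sup>2)" for s
  define F where "F s = - q * (ln (N s) - ln ((s - r)\<^sup>2) / 2) + sqrt (1 - s\<^sup>2) - r * arcsin s" for s
  \<comment> \<open>\<open>K\<close> drops the term of \<open>F\<close> that is singular at \<open>r\<close>; being even about \<open>r\<close>, it cancels in
      \<open>F (r - e) - F (r + e)\<close>.\<close>
  define K where "K s = - q * ln (N s) + sqrt (1 - s\<^sup>2) - r * arcsin s" for s
  have r2: "r\<^sup>2 < 1" using assms by (simp add: abs_square_less_1)
  have qq: "q\<^sup>2 = 1 - r\<^sup>2" using r2 by (simp add: q_def)
  have N_pos: "N s > 0" if "-1 \<le> s" "s \<le> 1" for s
  proof -
    have "\<bar>r * s\<bar> < 1"
      using that assms by (auto simp: abs_mult intro: le_less_trans[OF mult_left_le])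
    moreover have "q * sqrt (1 - s\<^sup>2) \<ge> 0"
      using that assms by (auto simp: q_def abs_square_le_1 intro!: mult_nonneg_nonneg)
    ultimately show ?thesis unfolding N_def by linarith
  qed
  have "continuous_on S N" for S
    unfolding N_def by (intro continuous_intros)
  then have contF: "continuous_on ({-1..1} - {r}) F" and contK: "continuous_on {-1..1} K"
    unfolding F_def K_def using N_pos by (auto intro!: continuous_intros simp: less_imp_neq[symmetric])
  have "(F has_real_derivative sqrt (1 - x\<^sup>2) / (x - r)) (at x)"
    if x: "-1 < x" "x < 1" "x \<noteq> r" for x
  proof -
    define w where "w = sqrt (1 - x\<^sup>2)"
    have x2: "x\<^sup>2 < 1"
      using x by (simp add: abs_square_less_1 abs_less_iff)
    then have w: "w > 0" "w\<^sup>2 = 1 - x\<^sup>2"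
      by (auto simp: w_def)
    have Nx: "N x > 0" using x by (intro N_pos) auto
    have dw: "((\<lambda>s. sqrt (1 - s\<^sup>2)) has_real_derivative - x / w) (at x)"
      using w x2 by (auto intro!: derivative_eq_intros simp: w_def[symmetric] field_simps)
    have dN: "(N has_real_derivative - r - q * x / w) (at x)"
      unfolding N_def[abs_def]
      by (rule DERIV_cong[OF DERIV_add[OF DERIV_diff[OF DERIV_const DERIV_cmult[OF DERIV_ident]] DERIV_cmult[OF dw]]])
        simp
    have dlog: "((\<lambda>s. ln ((s - r)\<^sup>2) / 2) has_real_derivative 1 / (x - r)) (at x)"
    proof -
      have "(x - r)\<^sup>2 > 0" using x by simp
      then show ?thesis
        using x by (auto intro!: derivative_eq_intros simp: field_simps power2_eq_square)
    qed
    have das: "(arcsin has_real_derivative 1 / w) (at x)"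
      using DERIV_arcsin[OF x(1,2)] by (simp add: w_def divide_inverse)
    have dlnN: "((\<lambda>s. ln (N s)) has_real_derivative (- r - q * x / w) / N x) (at x)"
      by (rule DERIV_cong[OF DERIV_chain2[OF DERIV_ln_divide[OF Nx] dN]]) simp
    have "(F has_real_derivative
        - q * ((- r - q * x / w) / N x - 1 / (x - r)) + - x / w - r * (1 / w)) (at x)"
      unfolding F_def[abs_def]
      by (intro DERIV_diff DERIV_add DERIV_cmult dlnN dlog dw das)
    moreover have "- q * ((- r - q * x / w) / N x - 1 / (x - r)) + - x / w - r * (1 / w) = w / (x - r)"
    proof -
      have "N x = 1 - r * x + q * w" "N x \<noteq> 0" "x - r \<noteq> 0"
        using Nx x by (auto simp: N_def w_def)
      then show ?thesis
        using w qq by (simp add: field_simps) algebra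
    qed
    ultimately show ?thesis by (simp add: w_def)
  qed
  moreover have "((\<lambda>e. F (r - e) - F (r + e)) \<longlongrightarrow> 0) (at_right 0)"
  proof -
    have "F (r - e) - F (r + e) = K (r - e) - K (r + e)" for e
      by (simp add: F_def K_def power2_eq_square algebra_simps)
    moreover have "isCont K r"
      using assms contK continuous_on_interior[of "{-1..1}" K r] by (auto simp: abs_less_iff)
    ultimately show ?thesis
      using symmetric_difference_tendsto_0 by presburger
  qed
  ultimately have "pv_has_integral (\<lambda>s. sqrt (1 - s\<^sup>2) / (s - r)) (-1) 1 r (F 1 - F (-1) + 0)"
    using assms contF by (intro pv_has_integral_antiderivative) auto
  moreover have "F 1 - F (-1) = - pi * r"
  proof -
    have "ln ((1 - r)\<^sup>2) = 2 * ln (1 - r)" "ln ((- 1 - r)\<^sup>2) = 2 * ln (1 + r)"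
      using assms by (simp_all add: ln_realpow power2_commute[of "-1" r])
    then show ?thesis by (simp add: F_def N_def algebra_simps)
  qed
  ultimately show ?thesis by simp
qed

lemma cheb_T_0 [simp]: "cheb_T 0 r = 1"
  by (simp add: cheb_T_def)

lemma cheb_T_Suc_Suc:
  assumes "\<bar>r\<bar> \<le> 1"
  shows "cheb_T (Suc (Suc k)) r = 2 * r * cheb_T (Suc k) r - cheb_T k r"
proof -
  have "real (Suc (Suc k)) * arccos r = real (Suc k) * arccos r + arccos r"
    "real k * arccos r = real (Suc k) * arccos r - arccos r"
    by (simp_all add: algebra_simps)
  then show ?thesis
    using assms by (simp add: cheb_T_def cos_add cos_diff cos_arccos_abs)
qed

lemma sin_Suc_Suc_mult:
  "sin (real (Suc (Suc k)) * t) = 2 * cos t * sin (real (Suc k) * t) - sin (real k * t)"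
proof -
  have "real (Suc (Suc k)) * t = real (Suc k) * t + t" "real k * t = real (Suc k) * t - t"
    by (simp_all add: algebra_simps)
  then show ?thesis
    by (simp add: sin_add sin_diff)
qed

lemma pv_has_integral_sin_arccos_div_Suc_Suc:
  assumes "\<bar>r\<bar> < 1"
    and "pv_has_integral (\<lambda>s. sin (real k * arccos s) / (s - r)) (-1) 1 r A"
    and "pv_has_integral (\<lambda>s. sin (real (Suc k) * arccos s) / (s - r)) (-1) 1 r B"
  shows "pv_has_integral (\<lambda>s. sin (real (Suc (Suc k)) * arccos s) / (s - r)) (-1) 1 r
           ((if k = 0 then pi else 0) + 2 * r * B - A)"
proof -
  have "pv_has_integral
      (\<lambda>s. 2 * sin (real (Suc k) * arccos s) + 2 * r * (sin (real (Suc k) * arccos s) / (s - r))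
          + (-1) * (sin (real k * arccos s) / (s - r)))
      (-1) 1 r (2 * (if k = 0 then pi/2 else 0) + 2 * r * B + (-1) * A)"
    using assms by (intro pv_has_integral_add pv_has_integral_cmult pv_has_integral_sin_arccos)
  also have "2 * (if k = 0 then pi/2 else 0) + 2 * r * B + (-1) * A = (if k = 0 then pi else 0) + 2 * r * B - A"
    by simp
  finally show ?thesis
  proof (rule pv_has_integral_cong)
    fix s :: real assume s: "s \<in> {-1..1}" "s \<noteq> r"
    have "2 * b + 2 * r * (b / (s - r)) + (-1) * (c / (s - r)) = (2 * s * b - c) / (s - r)" for b c
      using s by (simp add: divide_simps) (simp add: algebra_simps)
    then show "2 * sin (real (Suc k) * arccos s) + 2 * r * (sin (real (Suc k) * arccos s) / (s - r))
          + (-1) * (sin (real k * arccos s) / (s - r))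
        = sin (real (Suc (Suc k)) * arccos s) / (s - r)"
      using s by (simp only: sin_Suc_Suc_mult cos_arccos) simp
  qed (use assms in auto)
qed

text \<open>The correction at \<open>k = 0\<close> is because \<open>sin 0 = 0\<close> whereas \<open>T\<^sub>0 = 1\<close>.\<close>

lemma pv_has_integral_sin_arccos_div:
  assumes "\<bar>r\<bar> < 1"
  shows "pv_has_integral (\<lambda>s. sin (real k * arccos s) / (s - r)) (-1) 1 r
           (pi * ((if k = 0 then 1 else 0) - cheb_T k r))"
proof (induction k rule: induct_nat_012)
  case 0
  show ?case using pv_has_integral_0 by simp
next
  case 1
  have "pv_has_integral (\<lambda>s. sin (arccos s) / (s - r)) (-1) 1 r (- pi * r)"
    using pv_has_integral_sqrt_div[OF assms]
    by (rule pv_has_integral_cong) (use assms in \<open>auto simp: sin_arccos\<close>)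
  then show ?case
    using assms by (simp add: cheb_T_def cos_arccos_abs)
next
  case (ge2 k)
  have "(if k = 0 then pi else 0) + 2 * r * (pi * (0 - cheb_T (Suc k) r))
      - pi * ((if k = 0 then 1 else 0) - cheb_T k r) = pi * (0 - cheb_T (Suc (Suc k)) r)"
    using assms by (simp add: cheb_T_Suc_Suc algebra_simps)
  then show ?case
    using pv_has_integral_sin_arccos_div_Suc_Suc[OF assms ge2] by simp
qed

lemma sin_times_cis: "complex_of_real (sin t) * cis t = (cis t ^ 2 - 1) / (2 * \<i>)"
proof -
  have "complex_of_real (sin t) * cis t * (2 * \<i>) = cis t ^ 2 - 1"
    using sin_cos_squared_add[of t] by (simp add: complex_eq_iff power2_eq_square algebra_simps)
  then show ?thesis
    by (simp add: field_simps)
qed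

lemma sin_mult_times_sin_power_even:
  fixes t :: real and M p :: nat
  shows "sin (real (M + 2*p) * t) * sin t ^ (2*p) =
    (-1/4)^p * (\<Sum>j=0..2*p. (-1)^j * real (2*p choose j) * sin (real (M + 2*j) * t))"
proof -
  define z where "z = cis t"
  have cis_Mj: "cis (real M * t) * z ^ (2*j) = cis (real (M + 2*j) * t)" for j
    by (simp only: z_def Complex.DeMoivre cis_mult) (simp add: algebra_simps)
  have four: "(2 * \<i>) ^ (2*p) = (-4 :: complex) ^ p"
    by (simp add: power_mult power_mult_distrib)
  have "cis (real (M + 2*p) * t) * complex_of_real (sin t ^ (2*p))
      = cis (real M * t) * (complex_of_real (sin t) * z) ^ (2*p)"
    unfolding cis_Mj[symmetric] by (simp add: power_mult_distrib)
  also have "\<dots> = cis (real M * t) * (z\<^sup>2 - 1) ^ (2*p) / (-4) ^ p"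
    by (simp only: z_def sin_times_cis power_divide times_divide_eq_right four)
  also have "\<dots> = (\<Sum>j\<le>2*p.
      cis (real M * t) * (of_nat (2*p choose j) * (z\<^sup>2)^j * (-1)^(2*p-j)) / (-4) ^ p)"
  proof -
    have "(z\<^sup>2 - 1) ^ (2*p) = (\<Sum>j\<le>2*p. of_nat (2*p choose j) * (z\<^sup>2)^j * (-1)^(2*p-j))"
      using binomial_ring[of "z\<^sup>2" "-1" "2*p"] by simp
    then show ?thesis
      by (simp add: sum_distrib_left sum_divide_distrib)
  qed
  also have "\<dots> = (\<Sum>j\<le>2*p.
      complex_of_real ((-1/4)^p * ((-1)^j * real (2*p choose j))) * cis (real (M + 2*j) * t))"
  proof (rule sum.cong[OF refl])
    fix j assume "j \<in> {..2*p}"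
    then have "(-1 :: complex) ^ (2*p-j) = (-1)^j"
      by (cases "even j") (simp_all add: power_diff power_mult)
    moreover have "complex_of_real ((-1/4)^p) = 1 / (-4)^p"
      by (simp flip: power_one_over)
    ultimately show "cis (real M * t) * (of_nat (2*p choose j) * (z\<^sup>2)^j * (-1)^(2*p-j)) / (-4) ^ p
        = complex_of_real ((-1/4)^p * ((-1)^j * real (2*p choose j))) * cis (real (M + 2*j) * t)"
      unfolding cis_Mj[symmetric] power_mult[symmetric] of_real_mult by simp
  qed
  finally have "Im (cis (real (M + 2*p) * t) * complex_of_real (sin t ^ (2*p))) =
      Im (\<Sum>j\<le>2*p. complex_of_real ((-1/4)^p * ((-1)^j * real (2*p choose j))) * cis (real (M + 2*j) * t))"
    by simp
  then show ?thesis
    by (simp add: sum_distrib_left atMost_atLeast0 mult.assoc)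
qed

lemma pv_has_integral_sin_mult_times_sin_power_even_div:
  assumes "\<bar>r\<bar> < 1" "M > 0"
  shows "pv_has_integral
           (\<lambda>s. sin (real (M + 2*p) * arccos s) * sin (arccos s) ^ (2*p) / (s - r)) (-1) 1 r
           (- pi * (-1/4)^p * (\<Sum>j=0..2*p. (-1)^j * real (2*p choose j) * cheb_T (M + 2*j) r))"
proof -
  define c where "c j = (-1/4)^p * ((-1)^j * real (2*p choose j))" for j
  have "pv_has_integral (\<lambda>s. \<Sum>j=0..2*p. c j * (sin (real (M + 2*j) * arccos s) / (s - r))) (-1) 1 r
      (\<Sum>j=0..2*p. c j * (pi * ((if M + 2*j = 0 then 1 else 0) - cheb_T (M + 2*j) r)))"
    by (intro pv_has_integral_sum pv_has_integral_cmult pv_has_integral_sin_arccos_div assms) simp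
  also have "(\<Sum>j=0..2*p. c j * (pi * ((if M + 2*j = 0 then 1 else 0) - cheb_T (M + 2*j) r)))
      = - pi * (-1/4)^p * (\<Sum>j=0..2*p. (-1)^j * real (2*p choose j) * cheb_T (M + 2*j) r)"
    using assms(2) unfolding c_def by (simp add: sum_distrib_left mult_ac)
  finally show ?thesis
  proof (rule pv_has_integral_cong)
    fix s :: real
    show "(\<Sum>j=0..2*p. c j * (sin (real (M + 2*j) * arccos s) / (s - r)))
        = sin (real (M + 2*p) * arccos s) * sin (arccos s) ^ (2*p) / (s - r)"
      unfolding sin_mult_times_sin_power_even c_def
      by (simp add: sum_distrib_left sum_divide_distrib mult_ac)
  qed (use assms in auto)
qed

lemma powr_half_one_minus_square:
  assumes "\<bar>s\<bar> \<le> 1" "k > 0"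
  shows "(1 - s\<^sup>2) powr (real k / 2) = sin (arccos s) ^ k"
proof (cases "\<bar>s\<bar> = 1")
  case True
  then show ?thesis
    using assms by (auto simp: sin_arccos abs_if power2_eq_square split: if_splits)
next
  case False
  then have "1 - s\<^sup>2 > 0"
    using assms(1) by (simp add: abs_square_less_1)
  then have "(1 - s\<^sup>2) powr (real k / 2) = sqrt (1 - s\<^sup>2) ^ k"
    by (simp add: powr_half_sqrt[symmetric] powr_powr powr_realpow[symmetric])
  then show ?thesis
    using assms(1) by (simp add: sin_arccos abs_le_iff)
qed

lemma cheb_U_mult_one_minus_square_powr:
  assumes "\<bar>s\<bar> \<le> 1" "p > 0"
  shows "cheb_U n s * (1 - s\<^sup>2) powr (real p + 1/2)
           = sin ((real n + 1) * arccos s) * sin (arccos s) ^ (2*p)"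
proof -
  have "(1 - s\<^sup>2) powr (real p + 1/2) = sin (arccos s) ^ Suc (2*p)"
    using powr_half_one_minus_square[OF assms(1), of "Suc (2*p)"] by (simp add: add_divide_distrib add.commute)
  then show ?thesis
    using assms(2) by (cases "sin (arccos s) = 0") (simp_all add: cheb_U_def)
qed

theorem mainTheorem2:
  fixes m n :: nat and r :: real
  assumes "m \<ge> 2" and "n \<ge> 2 * m - 2" and "\<bar>r\<bar> < 1"
  shows "pv_has_integral
           (\<lambda>s. cheb_U n s * (1 - s\<^sup>2) powr (real m - 1/2) / (s - r)) (-1) 1 r
           (pi * (-1) ^ m * (1/2) ^ (2 * m - 2) *
              (\<Sum>j = 0..2 * m - 2. (-1) ^ j * real ((2 * m - 2) choose j)
                 * cheb_T (n + 3 + 2 * j - 2 * m) r))"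
proof -
  define p where "p = m - 1"
  define M where "M = n + 3 - 2 * m"
  have p: "m = Suc p" "p > 0" "real m - 1/2 = real p + 1/2"
    using assms(1) by (auto simp: p_def)
  have M: "M > 0" "real n + 1 = real (M + 2 * p)" "n + 3 + 2 * j - 2 * m = M + 2 * j" for j
    using assms(1,2) by (auto simp: M_def p_def)
  have "(-1/4 :: real) ^ p = (-1) ^ p * (1/2) ^ (2 * p)"
    unfolding power_mult by (simp add: power2_eq_square flip: power_mult_distrib)
  then have "pv_has_integral
      (\<lambda>s. sin (real (M + 2*p) * arccos s) * sin (arccos s) ^ (2*p) / (s - r)) (-1) 1 r
      (pi * (-1) ^ m * (1/2) ^ (2 * m - 2) *
         (\<Sum>j = 0..2 * m - 2. (-1) ^ j * real ((2 * m - 2) choose j) * cheb_T (n + 3 + 2 * j - 2 * m) r))"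
    using pv_has_integral_sin_mult_times_sin_power_even_div[OF assms(3) M(1), of p]
    unfolding M(3) by (simp add: p(1) mult.assoc)
  then show ?thesis
    by (rule pv_has_integral_cong)
      (use assms(3) p(2) in \<open>auto simp: p(3) M(2) cheb_U_mult_one_minus_square_powr\<close>)
qed

end
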